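(* Assume conditions (G) and (B) hold and let $\alpha\in(0,1)$ satisfy $r_n<\alpha$ and $\alpha+2r_n<1$. Let $r_n'=2r_n+\delta_n$. Then with probability at least $1-\alpha-r_n'$, $$V(\pi)\ge LV_{1-\alpha}(\pi):=\widehat V(\pi)-\widehat q_{1-\alpha,\Pi}\,\widehat s(\pi)\quad\text{for all }\pi\in\Pi;$$ equivalently, $\max_{\pi\in\Pi}\widehat Z_\pi\le\widehat q_{1-\alpha,\Pi}$ with probability at least $1-\alpha-r_n'$.
   Context: Setting. $\Pi$ is a finite nonempty set of policies. $V:\Pi\to\mathbb R$ is a deterministic welfare function; on a probability space (the data), $(\widehat V(\pi))_{\pi\in\Pi}$ are real random variables and $(\widehat s(\pi))_{\pi\in\Pi}$ strictly positive random variables. $\widehat Z_\pi=(\widehat V(\pi)-V(\pi))/\widehat s(\pi)$. $(Z_\pi)_{\pi\in\Pi}$ is a centered Gaussian vector with $\mathrm{Var}(Z_\pi)=1$ for all $\pi$. $\mathcal A$ is the collection of rectangles in $\mathbb R^\Pi$ (products of possibly unbounded intervals). Condition (G): there is $r_n\ge0$ with $|\Pr((\widehat Z_\pi)_\pi\in A)-\Pr((Z_\pi)_\pi\in A)|\le r_n$ for all $A\in\mathcal A$. Bootstrap: $\widehat C$ is a data-dependent positive semidefinite $|\Pi|\times|\Pi|$ matrix; conditionally on the data, $(\widehat Z^*_\pi)_{\pi\in\Pi}\sim N(0,\widehat C)$, and $\Pr^*$ denotes this conditional probability given the data. Condition (B): there is $\delta_n\in[0,1]$ such that, with probability at least $1-\delta_n$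 over the data, $|\Pr^*((\widehat Z^*_\pi)_\pi\in A)-\Pr((Z_\pi)_\pi\in A)|\le r_n$ for all $A\in\mathcal A$. Quantiles: for $\tau\in(0,1)$ the $\tau$-quantile of $X$ under $P$ is $\inf\{x:P(X\le x)\ge\tau\}$. $\widehat q_{\tau,\Pi}$ is the $\tau$-quantile of $\max_{\pi\in\Pi}\widehat Z^*_\pi$ under $\Pr^*$. *)

theory Defs
  imports "HOL-Probability.Probability"
begin

definition centered_normal_law :: "real \<Rightarrow> real measure" where
  "centered_normal_law v =
     (if v > 0 then density lborel (normal_density 0 (sqrt v)) else return borel 0)"

text \<open>mu is the law N(0,C) of a centered Gaussian vector indexed by P, as a measure on
  the product space R^P (extensional functions on P); characterised by Cramer-Wold:
  every linear combination is centered normal with variance t'Ct.\<close>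
definition gaussian_law :: "'p set \<Rightarrow> ('p \<Rightarrow> 'p \<Rightarrow> real) \<Rightarrow> ('p \<Rightarrow> real) measure \<Rightarrow> bool" where
  "gaussian_law P C mu \<longleftrightarrow>
     sets mu = sets (PiM P (\<lambda>_. borel)) \<and> prob_space mu \<and>
     (\<forall>t. distr mu borel (\<lambda>x. \<Sum>\<pi>\<in>P. t \<pi> * x \<pi>)
            = centered_normal_law (\<Sum>\<pi>\<in>P. \<Sum>\<rho>\<in>P. t \<pi> * C \<pi> \<rho> * t \<rho>))"

definition psd_matrix :: "'p set \<Rightarrow> ('p \<Rightarrow> 'p \<Rightarrow> real) \<Rightarrow> bool" where
  "psd_matrix P C \<longleftrightarrow> (\<forall>\<pi>\<in>P. \<forall>\<rho>\<in>P. C \<pi> \<rho> = C \<rho> \<pi>) \<and>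
     (\<forall>t. (\<Sum>\<pi>\<in>P. \<Sum>\<rho>\<in>P. t \<pi> * C \<pi> \<rho> * t \<rho>) \<ge> 0)"

definition quantile :: "'b measure \<Rightarrow> ('b \<Rightarrow> real) \<Rightarrow> real \<Rightarrow> real" where
  "quantile Q X tau = Inf {x. measure Q {y \<in> space Q. X y \<le> x} \<ge> tau}"

end

theory Submission
  imports Defs
begin

text \<open>Let q be the (1 - \<alpha> - r)-quantile of max Z. On the event of probability at least
  1 - \<delta> where (B) holds, the bootstrap distribution function of the maximum is within r of
  that of max Z, so the bootstrap (1 - \<alpha>)-quantile is at least q. Applying (G) to the
  rectangle (-\<infinity>, q]^\<Pi> gives max Zhat \<le> q with probability at least
  Pr(max Z \<le> q) - r \<ge> 1 - \<alpha> - 2r, the quantile being attained by right continuity of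
  distribution functions. Intersecting the two events costs at most \<delta>.\<close>

lemma (in prob_space) cdf_distr:
  fixes X :: "'a \<Rightarrow> real"
  assumes "X \<in> borel_measurable M"
  shows "cdf (distr M borel X) x = measure M {y \<in> space M. X y \<le> x}"
  using assms by (auto simp: cdf_def measure_distr intro!: arg_cong[where f = "measure M"])

lemma (in prob_space) quantile_level_set_nonempty:
  fixes X :: "'a \<Rightarrow> real"
  assumes X: "X \<in> borel_measurable M" and "\<tau> < 1"
  shows "\<exists>x. \<tau> \<le> measure M {y \<in> space M. X y \<le> x}"
proof -
  interpret D: real_distribution "distr M borel X" using X by simp
  have "\<forall>\<^sub>F x in at_top. \<tau> < cdf (distr M borel X) x"
    using order_tendstoD(1)[OF D.cdf_lim_at_top_prob \<open>\<tau> < 1\<close>] .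
  then obtain x where "\<tau> < cdf (distr M borel X) x"
    by (auto simp: eventually_at_top_linorder)
  then show ?thesis using cdf_distr[OF X] by (auto intro: less_imp_le)
qed

lemma (in prob_space) quantile_level_set_bdd_below:
  fixes X :: "'a \<Rightarrow> real"
  assumes X: "X \<in> borel_measurable M" and "0 < \<tau>"
  shows "bdd_below {x. \<tau> \<le> measure M {y \<in> space M. X y \<le> x}}"
proof -
  interpret D: real_distribution "distr M borel X" using X by simp
  have "\<forall>\<^sub>F x in at_bot. cdf (distr M borel X) x < \<tau>"
    using order_tendstoD(2)[OF D.cdf_lim_at_bot \<open>0 < \<tau>\<close>] .
  then obtain b where b: "\<And>x. x \<le> b \<Longrightarrow> cdf (distr M borel X) x < \<tau>"
    by (auto simp: eventually_at_bot_linorder)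
  show ?thesis
  proof (rule bdd_belowI)
    fix x assume "x \<in> {x. \<tau> \<le> measure M {y \<in> space M. X y \<le> x}}"
    then show "b \<le> x" using b[of x] cdf_distr[OF X] by force
  qed
qed

lemma (in prob_space) quantile_attained:
  fixes X :: "'a \<Rightarrow> real"
  assumes X: "X \<in> borel_measurable M" and \<tau>: "0 < \<tau>" "\<tau> < 1"
  shows "\<tau> \<le> measure M {y \<in> space M. X y \<le> quantile M X \<tau>}"
proof -
  interpret D: real_distribution "distr M borel X" using X by simp
  define S where "S = {x. \<tau> \<le> measure M {y \<in> space M. X y \<le> x}}"
  define q where "q = quantile M X \<tau>"
  have q: "q = Inf S" by (simp add: q_def S_def quantile_def)
  have "S \<noteq> {}" using quantile_level_set_nonempty[OF X \<tau>(2)] by (auto simp: S_def)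
  have above: "\<tau> \<le> cdf (distr M borel X) x" if "q < x" for x
  proof -
    obtain s where "s \<in> S" "s < x" using cInf_lessD[OF \<open>S \<noteq> {}\<close>] \<open>q < x\<close> q by blast
    then show ?thesis
      using D.cdf_nondecreasing[of s x] cdf_distr[OF X] by (auto simp: S_def)
  qed
  have "(cdf (distr M borel X) \<longlongrightarrow> cdf (distr M borel X) q) (at_right q)"
    using D.cdf_is_right_cont[of q] by (simp add: continuous_within)
  moreover have "\<forall>\<^sub>F x in at_right q. \<tau> \<le> cdf (distr M borel X) x"
    using eventually_at_right_less[of q] by eventually_elim (rule above)
  ultimately have "\<tau> \<le> cdf (distr M borel X) q"
    by (rule tendsto_lowerbound) simp
  then show ?thesis using cdf_distr[OF X] by (simp add: q_def)
qed

lemma quantile_shifted_level_le: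
  fixes X :: "'a \<Rightarrow> real" and Y :: "'b \<Rightarrow> real"
  assumes M: "prob_space M" and N: "prob_space N"
    and X: "X \<in> borel_measurable M" and Y: "Y \<in> borel_measurable N"
    and \<tau>: "\<tau> < 1" "0 < \<tau> - r"
    and cdf_le: "\<And>x. measure M {y \<in> space M. X y \<le> x} \<le> measure N {y \<in> space N. Y y \<le> x} + r"
  shows "quantile N Y (\<tau> - r) \<le> quantile M X \<tau>"
  unfolding quantile_def
proof (rule cInf_superset_mono)
  show "{x. \<tau> \<le> measure M {y \<in> space M. X y \<le> x}} \<noteq> {}"
    using prob_space.quantile_level_set_nonempty[OF M X \<tau>(1)] by blast
  show "bdd_below {x. \<tau> - r \<le> measure N {y \<in> space N. Y y \<le> x}}"
    by (rule prob_space.quantile_level_set_bdd_below[OF N Y \<tau>(2)])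
  show "{x. \<tau> \<le> measure M {y \<in> space M. X y \<le> x}}
      \<subseteq> {x. \<tau> - r \<le> measure N {y \<in> space N. Y y \<le> x}}"
    by (auto dest: order_trans[OF _ cdf_le])
qed

lemma (in prob_space) prob_Int_lower_bound:
  assumes "A \<in> events" "B \<in> events"
  shows "prob A + prob B - 1 \<le> prob (A \<inter> B)"
  using measure_Un3[of A M B] prob_le_1[of "A \<union> B"] assms by (simp add: fmeasurable_eq_sets)

lemma Max_image_le_set_eq_PiE:
  assumes sets_Q: "sets Q = sets (PiM P (\<lambda>_. borel))" and P: "finite P" "P \<noteq> {}"
  shows "{z \<in> space Q. Max (z ` P) \<le> (x :: real)} = PiE P (\<lambda>_. {..x})"
  using P by (auto simp: sets_eq_imp_space_eq[OF sets_Q] space_PiM PiE_def Pi_def)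

lemma borel_measurable_Max_image:
  assumes sets_Q: "sets Q = sets (PiM P (\<lambda>_. borel))" and P: "finite P"
  shows "(\<lambda>z. Max (z ` P) :: real) \<in> borel_measurable Q"
  unfolding measurable_cong_sets[OF sets_Q refl]
  using P by (intro borel_measurable_Max) auto

lemma quantile_Max_attained:
  assumes Q: "prob_space Q" "sets Q = sets (PiM P (\<lambda>_. borel))"
    and P: "finite P" "P \<noteq> {}" and \<tau>: "0 < \<tau>" "\<tau> < 1"
  shows "\<tau> \<le> measure Q (PiE P (\<lambda>_. {..quantile Q (\<lambda>z. Max (z ` P)) \<tau>}))"
  using prob_space.quantile_attained[OF Q(1) borel_measurable_Max_image[OF Q(2) P(1)] \<tau>]
  by (simp add: Max_image_le_set_eq_PiE[OF Q(2) P])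

lemma quantile_Max_shifted_level_le:
  assumes Q: "prob_space Q" "sets Q = sets (PiM P (\<lambda>_. borel))"
    and Q': "prob_space Q'" "sets Q' = sets (PiM P (\<lambda>_. borel))"
    and P: "finite P" "P \<noteq> {}" and \<tau>: "\<tau> < 1" "0 < \<tau> - r"
    and rect_le: "\<And>x. measure Q (PiE P (\<lambda>_. {..x})) \<le> measure Q' (PiE P (\<lambda>_. {..x})) + r"
  shows "quantile Q' (\<lambda>z. Max (z ` P)) (\<tau> - r) \<le> quantile Q (\<lambda>z. Max (z ` P)) \<tau>"
  using rect_le
  by (intro quantile_shifted_level_le Q(1) Q'(1) \<tau> borel_measurable_Max_image[OF Q(2) P(1)]
      borel_measurable_Max_image[OF Q'(2) P(1)])
    (simp add: Max_image_le_set_eq_PiE[OF Q(2) P] Max_image_le_set_eq_PiE[OF Q'(2) P])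

lemma gaussian_law_prob_space:
  "gaussian_law P C mu \<Longrightarrow> prob_space mu"
  and gaussian_law_sets:
  "gaussian_law P C mu \<Longrightarrow> sets mu = sets (PiM P (\<lambda>_. borel))"
  by (simp_all add: gaussian_law_def)

theorem proposition2:
  fixes M :: "'a measure" and Pi :: "'p set"
    and V :: "'p \<Rightarrow> real" and Vhat shat :: "'a \<Rightarrow> 'p \<Rightarrow> real"
    and CZ :: "'p \<Rightarrow> 'p \<Rightarrow> real" and muZ :: "('p \<Rightarrow> real) measure"
    and Chat :: "'a \<Rightarrow> 'p \<Rightarrow> 'p \<Rightarrow> real" and Pstar :: "'a \<Rightarrow> ('p \<Rightarrow> real) measure"
    and r \<delta> \<alpha> :: real
  assumes M: "prob_space M"
    and Pi: "finite Pi" "Pi \<noteq> {}"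
    and Vhat_meas: "\<And>\<pi>. \<pi> \<in> Pi \<Longrightarrow> (\<lambda>\<omega>. Vhat \<omega> \<pi>) \<in> borel_measurable M"
    and shat_meas: "\<And>\<pi>. \<pi> \<in> Pi \<Longrightarrow> (\<lambda>\<omega>. shat \<omega> \<pi>) \<in> borel_measurable M"
    and shat_pos: "\<And>\<omega> \<pi>. \<omega> \<in> space M \<Longrightarrow> \<pi> \<in> Pi \<Longrightarrow> shat \<omega> \<pi> > 0"
    and Z: "gaussian_law Pi CZ muZ" "\<And>\<pi>. \<pi> \<in> Pi \<Longrightarrow> CZ \<pi> \<pi> = 1"
    and Chat: "\<And>\<omega>. \<omega> \<in> space M \<Longrightarrow> psd_matrix Pi (Chat \<omega>)"
    and Pstar: "\<And>\<omega>. \<omega> \<in> space M \<Longrightarrow> gaussian_law Pi (Chat \<omega>) (Pstar \<omega>)"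
    and r: "r \<ge> 0"
    and G: "\<And>I. (\<forall>\<pi>\<in>Pi. is_interval (I \<pi>)) \<Longrightarrow>
              \<bar>measure M {\<omega> \<in> space M. \<forall>\<pi>\<in>Pi. (Vhat \<omega> \<pi> - V \<pi>) / shat \<omega> \<pi> \<in> I \<pi>}
                 - measure muZ (PiE Pi I)\<bar> \<le> r"
    and \<delta>: "0 \<le> \<delta>" "\<delta> \<le> 1"
    and B: "\<exists>E \<in> sets M. measure M E \<ge> 1 - \<delta> \<and>
              (\<forall>\<omega>\<in>E. \<forall>I. (\<forall>\<pi>\<in>Pi. is_interval (I \<pi>)) \<longrightarrow>
                 \<bar>measure (Pstar \<omega>) (PiE Pi I) - measure muZ (PiE Pi I)\<bar> \<le> r)"
    and \<alpha>: "0 < \<alpha>" "\<alpha> < 1" "r < \<alpha>" "\<alpha> + 2 * r < 1"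
  shows "\<exists>E \<in> sets M. measure M E \<ge> 1 - \<alpha> - (2 * r + \<delta>) \<and>
           (\<forall>\<omega>\<in>E. \<forall>\<pi>\<in>Pi.
              V \<pi> \<ge> Vhat \<omega> \<pi>
                     - quantile (Pstar \<omega>) (\<lambda>z. Max (z ` Pi)) (1 - \<alpha>) * shat \<omega> \<pi>)"
proof -
  interpret prob_space M by (rule M)
  define qhat where "qhat \<omega> = quantile (Pstar \<omega>) (\<lambda>z. Max (z ` Pi)) (1 - \<alpha>)" for \<omega>
  define q where "q = quantile muZ (\<lambda>z. Max (z ` Pi)) (1 - \<alpha> - r)"
  define A where "A = {\<omega> \<in> space M. \<forall>\<pi>\<in>Pi. (Vhat \<omega> \<pi> - V \<pi>) / shat \<omega> \<pi> \<in> {..q}}"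
  note Z_law = gaussian_law_prob_space[OF Z(1)] gaussian_law_sets[OF Z(1)]
  obtain EB where EB: "EB \<in> events" "1 - \<delta> \<le> prob EB"
    and boot: "\<And>\<omega> I. \<omega> \<in> EB \<Longrightarrow> \<forall>\<pi>\<in>Pi. is_interval (I \<pi>) \<Longrightarrow>
        \<bar>measure (Pstar \<omega>) (PiE Pi I) - measure muZ (PiE Pi I)\<bar> \<le> r"
    using B by blast
  have A: "A \<in> events"
    unfolding A_def
  proof (rule sets.sets_Collect_finite_All[OF _ Pi(1)])
    fix \<pi> assume "\<pi> \<in> Pi"
    then have "(\<lambda>\<omega>. (Vhat \<omega> \<pi> - V \<pi>) / shat \<omega> \<pi>) \<in> borel_measurable M"
      using Vhat_meas shat_meas by measurable
    then show "{\<omega> \<in> space M. (Vhat \<omega> \<pi> - V \<pi>) / shat \<omega> \<pi> \<in> {..q}} \<in> events"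
      by measurable
  qed
  have "1 - \<alpha> - r \<le> measure muZ (PiE Pi (\<lambda>_. {..q}))"
    unfolding q_def using \<alpha> r by (intro quantile_Max_attained Z_law Pi) auto
  moreover have "\<bar>prob A - measure muZ (PiE Pi (\<lambda>_. {..q}))\<bar> \<le> r"
    unfolding A_def by (rule G) (simp add: is_interval_ic)
  ultimately have "1 - \<alpha> - 2 * r \<le> prob A" by linarith
  then have "1 - \<alpha> - (2 * r + \<delta>) \<le> prob (A \<inter> EB)"
    using prob_Int_lower_bound[OF A EB(1)] EB(2) by linarith
  moreover have q_le_qhat: "q \<le> qhat \<omega>" if "\<omega> \<in> EB" for \<omega>
  proof -
    have "gaussian_law Pi (Chat \<omega>) (Pstar \<omega>)"
      using Pstar EB(1) \<open>\<omega> \<in> EB\<close> sets.sets_into_space by blast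
    moreover have "measure (Pstar \<omega>) (PiE Pi (\<lambda>_. {..x})) \<le> measure muZ (PiE Pi (\<lambda>_. {..x})) + r" for x
      using boot[OF \<open>\<omega> \<in> EB\<close>, of "\<lambda>_. {..x}"] by (simp add: is_interval_ic abs_le_iff)
    ultimately show ?thesis
      unfolding q_def qhat_def using \<alpha>
      by (intro quantile_Max_shifted_level_le Z_law Pi gaussian_law_prob_space gaussian_law_sets) auto
  qed
  have "V \<pi> \<ge> Vhat \<omega> \<pi> - qhat \<omega> * shat \<omega> \<pi>" if \<omega>: "\<omega> \<in> A \<inter> EB" and \<pi>: "\<pi> \<in> Pi" for \<omega> \<pi>
  proof -
    have "(Vhat \<omega> \<pi> - V \<pi>) / shat \<omega> \<pi> \<le> qhat \<omega>"
      using \<omega> \<pi> q_le_qhat by (force simp: A_def)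
    then show ?thesis using shat_pos[of \<omega> \<pi>] \<omega> \<pi> by (simp add: A_def divide_le_eq algebra_simps)
  qed
  ultimately show ?thesis
    using A EB(1) unfolding qhat_def by blast
qed

end
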